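(* Let $\gamma>0$, $\beta\ge0$, $t_0\in\mathbb{R}$, and let $w_n$ ($n\ge0$) be defined on $[0,\infty)\times\mathbb{R}$ by \[ w_0(x_3,t)=\frac{\theta(t-t_0)}{4(\pi\gamma)^{3/2}\sqrt{t-t_0}}e^{-\frac{x_3^2}{4\gamma(t-t_0)}},\qquad w_n(x_3,t)=\frac{-\beta}{\sqrt{\pi\gamma}}\int_{t_0}^t\frac{w_{n-1}(0,s)}{\sqrt{t-s}}e^{-\frac{x_3^2}{4\gamma(t-s)}}\,ds\ (n\ge1,\ t>t_0), \] and $w_n=0$ for $t\le t_0$. Then for every $n\ge1$, $x_3\ge0$, $t>t_0$, with $\zeta=x_3/\sqrt{4\gamma(t-t_0)}$, \[ w_n(x_3,t)=\frac{(-\beta)^n(t-t_0)^{(n-1)/2}}{4(\pi\gamma)^{(n+3)/2}}\cdot\frac{2^{\lfloor\frac{n-1}{2}\rfloor}\pi^{\lfloor\frac n2\rfloor}}{(n-2)!!}\Big[B\big(\tfrac n2,\tfrac12\big)\,{}_1F_1\big(\tfrac{1-n}{2},\tfrac12;-\zeta^2\big)-2\sqrt\pi\,\zeta\,{}_1F_1\big(1-\tfrac n2,\tfrac32;-\zeta^2\big)\Big], \] and in particular \[ w_n(0,t)=\frac{(-\beta)^n(t-t_0)^{(n-1)/2}}{4(\pi\gamma)^{(n+3)/2}}\cdot\frac{2^{\lfloor\frac n2\rfloor}\pi^{\lfloor\frac{n+1}{2}\rfloor}}{(n-1)!!}. \]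
   Context: $\theta$ is the Heaviside function. $\lfloor x\rfloor$ is the largest integer $\le x$. Double factorials: $m!!=m(m-2)(m-4)\cdots$ with $(-1)!!=0!!=1$. $B(p,q)=\int_0^1 s^{p-1}(1-s)^{q-1}ds$ is the beta function and ${}_1F_1(a,c;z)=\sum_{k\ge0}\frac{(a)_k}{(c)_kk!}z^k$ is Kummer's confluent hypergeometric function, $(a)_k$ the Pochhammer symbol. *)

theory Defs
  imports "HOL-Analysis.Analysis"
begin

function dfact :: "int \<Rightarrow> nat" where
  "dfact m = (if m \<le> 0 then 1 else nat m * dfact (m - 2))"
  by auto
termination by (relation "Wellfounded.measure nat") auto

definition hyp1F1 :: "real \<Rightarrow> real \<Rightarrow> real \<Rightarrow> real" where
  "hyp1F1 a c z = (\<Sum>k. pochhammer a k / (pochhammer c k * fact k) * z ^ k)"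

fun w :: "real \<Rightarrow> real \<Rightarrow> real \<Rightarrow> nat \<Rightarrow> real \<Rightarrow> real \<Rightarrow> real" where
  "w gam bet t0 0 x3 t =
     (if t > t0 then exp (- (x3^2) / (4 * gam * (t - t0))) /
        (4 * (pi * gam) powr (3/2) * sqrt (t - t0)) else 0)"
| "w gam bet t0 (Suc n) x3 t =
     (if t > t0 then (- bet) / sqrt (pi * gam) *
        (LINT s:{t0<..<t}|lborel. w gam bet t0 n 0 s / sqrt (t - s) *
            exp (- (x3^2) / (4 * gam * (t - s))))
      else 0)"

end

theory Submission
  imports Defs
begin

text \<open>Substituting \<open>s = t0 + (t - t0) u\<close> and inducting on \<open>n\<close> gives
  \<open>w_m(0, s) = C_m (s - t0)^((m-1)/2)\<close> and
  \<open>w_(m+1)(x, t) = -\<beta> C_m (t - t0)^(m/2) F_b(\<zeta>) / sqrt(\<pi> \<gamma>)\<close>, where \<open>b = (m+1)/2\<close> and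
  \<open>F_b(\<zeta>) = \<integral>_0^1 u^(b-1) (1-u)^(-1/2) exp(-\<zeta>^2/(1-u)) du\<close>.
  The heart of the matter is that \<open>F_b\<close> equals the bracket \<open>R_b\<close> of the theorem when \<open>2b\<close> is a
  positive integer. Both equal \<open>B(b, 1/2)\<close> at \<open>\<zeta> = 0\<close>, and they decrease at the same rate:
  \<open>-F_b' = 2\<zeta> G_b\<close>, where \<open>G_b\<close> has \<open>(1-u)^(-3/2)\<close> in place of \<open>(1-u)^(-1/2)\<close>. Writing
  \<open>u^(b-1)\<close> as a Beta integral and using
  \<open>\<integral>_s^1 (u-s)^(-1/2) (1-u)^(-3/2) exp(-c/(1-u)) du = sqrt(\<pi>/c) (1-s)^(-1/2) exp(-c/(1-s))\<close>
  gives \<open>2\<zeta> G_b = 2 sqrt \<pi> F_(b-1/2) / B(b-1/2, 1/2)\<close>, and the contiguous relations of \<open>1F1\<close>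
  give the same recursion for \<open>-R_b'\<close>. Induction on \<open>2b\<close>, starting from
  \<open>2\<zeta> G_(1/2) = 2 sqrt \<pi> exp(-\<zeta>^2)\<close>, proves \<open>F_b = R_b\<close>. At \<open>\<zeta> = 0\<close> the constants \<open>C_m\<close>
  collect Beta values at half-integers, which are quotients of double factorials.\<close>

section \<open>Kummer's function\<close>

definition kummer_coeff :: "real \<Rightarrow> real \<Rightarrow> nat \<Rightarrow> real" where
  "kummer_coeff a c k = pochhammer a k / (pochhammer c k * fact k)"

lemma hyp1F1_eq_suminf: "hyp1F1 a c z = (\<Sum>k. kummer_coeff a c k * z ^ k)"
  by (simp add: hyp1F1_def kummer_coeff_def)

lemma abs_pochhammer_le:
  fixes a c :: real
  assumes "c > 0"
  shows "\<bar>pochhammer a k\<bar> \<le> (\<bar>a\<bar> / c + 1) ^ k * pochhammer c k"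
proof (induction k)
  case 0
  then show ?case by simp
next
  case (Suc k)
  have "\<bar>a + real k\<bar> \<le> \<bar>a\<bar> + real k"
    by simp
  also have "\<dots> \<le> (\<bar>a\<bar> / c + 1) * (c + real k)"
    using assms by (simp add: algebra_simps) (simp add: field_simps)
  finally have "\<bar>a + real k\<bar> \<le> (\<bar>a\<bar> / c + 1) * (c + real k)" .
  then have "\<bar>pochhammer a k\<bar> * \<bar>a + real k\<bar> \<le> ((\<bar>a\<bar> / c + 1) ^ k * pochhammer c k) * ((\<bar>a\<bar> / c + 1) * (c + real k))"
    using Suc assms by (intro mult_mono) auto
  also have "\<dots> = (\<bar>a\<bar> / c + 1) ^ Suc k * pochhammer c (Suc k)"
    by (simp add: pochhammer_Suc algebra_simps)
  finally show ?case
    by (simp add: pochhammer_Suc abs_mult)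
qed

lemma summable_kummer_series:
  fixes a c z :: real
  assumes "c > 0"
  shows "summable (\<lambda>k. kummer_coeff a c k * z ^ k)"
proof (rule summable_comparison_test'[where N = 0])
  let ?C = "\<bar>a\<bar> / c + 1"
  show "summable (\<lambda>k. inverse (fact k) * (?C * \<bar>z\<bar>) ^ k)"
    by (rule summable_exp)
  fix k :: nat
  have pos: "pochhammer c k > 0"
    using assms by (rule pochhammer_pos)
  have "norm (kummer_coeff a c k * z ^ k) = \<bar>pochhammer a k\<bar> / (pochhammer c k * fact k) * \<bar>z\<bar> ^ k"
    using pos by (simp add: kummer_coeff_def abs_mult power_abs)
  also have "\<dots> \<le> (?C ^ k * pochhammer c k) / (pochhammer c k * fact k) * \<bar>z\<bar> ^ k"
    using pos abs_pochhammer_le[OF assms, of a k] by (intro mult_right_mono divide_right_mono) auto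
  also have "\<dots> = inverse (fact k) * (?C * \<bar>z\<bar>) ^ k"
    using pos by (simp add: divide_inverse power_mult_distrib)
  finally show "norm (kummer_coeff a c k * z ^ k) \<le> inverse (fact k) * (?C * \<bar>z\<bar>) ^ k" .
qed

lemma sums_hyp1F1:
  fixes a c z :: real
  assumes "c > 0"
  shows "(\<lambda>k. kummer_coeff a c k * z ^ k) sums hyp1F1 a c z"
  unfolding hyp1F1_eq_suminf using summable_kummer_series[OF assms] by (rule summable_sums)

lemma diffs_kummer_coeff:
  fixes a c :: real
  assumes "c > 0"
  shows "diffs (kummer_coeff a c) k = a / c * kummer_coeff (a + 1) (c + 1) k"
proof -
  have "pochhammer (c + 1) k > 0"
    using assms by (intro pochhammer_pos) auto
  then show ?thesis
    using assms by (simp add: diffs_def kummer_coeff_def pochhammer_rec field_simps del: of_nat_Suc)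
qed

lemma sums_diffs_kummer_coeff:
  fixes a c z :: real
  assumes "c > 0"
  shows "(\<lambda>k. diffs (kummer_coeff a c) k * z ^ k) sums (a / c * hyp1F1 (a + 1) (c + 1) z)"
  using sums_mult[OF sums_hyp1F1[of "c + 1" "a + 1" z], of "a / c"] assms
  by (simp add: diffs_kummer_coeff mult.assoc)

lemma has_real_derivative_hyp1F1:
  fixes a c z :: real
  assumes "c > 0"
  shows "(hyp1F1 a c has_real_derivative (a / c * hyp1F1 (a + 1) (c + 1) z)) (at z)"
proof -
  have "((\<lambda>x. \<Sum>k. kummer_coeff a c k * x ^ k) has_field_derivative
          (\<Sum>k. diffs (kummer_coeff a c) k * z ^ k)) (at z)"
    by (rule termdiffs_strong_converges_everywhere) (rule summable_kummer_series[OF assms])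
  then show ?thesis
    using sums_unique[OF sums_diffs_kummer_coeff[OF assms, of a z]]
    by (simp add: hyp1F1_eq_suminf[abs_def])
qed

lemma hyp1F1_chain [derivative_intros]:
  fixes a c :: real
  assumes "c > 0" and "(f has_real_derivative f') (at x)"
  shows "((\<lambda>x. hyp1F1 a c (f x)) has_real_derivative (a / c * hyp1F1 (a + 1) (c + 1) (f x) * f')) (at x)"
  using DERIV_chain2[OF has_real_derivative_hyp1F1[OF assms(1)] assms(2)] .

lemma hyp1F1_at_zero [simp]: "hyp1F1 a c 0 = 1"
  by (simp only: hyp1F1_eq_suminf powser_zero) (simp add: kummer_coeff_def)

lemma hyp1F1_same_params:
  fixes a z :: real
  assumes "a > 0"
  shows "hyp1F1 a a z = exp z"
proof -
  have "kummer_coeff a a k * z ^ k = z ^ k /\<^sub>R fact k" for k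
  proof -
    have "pochhammer a k \<noteq> 0"
      using pochhammer_pos[OF assms, of k] by simp
    then show ?thesis
      by (simp add: kummer_coeff_def divide_inverse mult.commute)
  qed
  then have "(\<lambda>k. kummer_coeff a a k * z ^ k) = (\<lambda>k. z ^ k /\<^sub>R fact k)"
    by auto
  then show ?thesis
    using exp_converges[of z] by (simp add: hyp1F1_eq_suminf sums_iff)
qed

text \<open>Compared termwise: multiplying the \<open>k\<close>-th coefficient of \<open>1F1(a, c)\<close> by \<open>c - 1 + k\<close>
  turns \<open>pochhammer c k\<close> into \<open>pochhammer (c - 1) k\<close>.\<close>

lemma hyp1F1_contiguous:
  fixes a c z :: real
  assumes "c > 1"
  shows "(c - 1) * hyp1F1 a c z + z * (a / c * hyp1F1 (a + 1) (c + 1) z) = (c - 1) * hyp1F1 a (c - 1) z"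
proof -
  have c: "c > 0" "c - 1 > 0"
    using assms by simp_all
  have "(\<lambda>k. real (Suc k) * kummer_coeff a c (Suc k) * z ^ Suc k) sums (z * (a / c * hyp1F1 (a + 1) (c + 1) z))"
    using sums_mult[OF sums_diffs_kummer_coeff[OF c(1), of a z], of z]
    by (simp add: diffs_def algebra_simps)
  then have deriv: "(\<lambda>k. real k * kummer_coeff a c k * z ^ k) sums (z * (a / c * hyp1F1 (a + 1) (c + 1) z))"
    by (subst (asm) sums_Suc_iff) simp
  have termwise: "(c - 1) * (kummer_coeff a c k * z ^ k) + real k * kummer_coeff a c k * z ^ k
      = (c - 1) * (kummer_coeff a (c - 1) k * z ^ k)" for k
  proof -
    have pos: "pochhammer c k > 0" "pochhammer (c - 1) k > 0"
      using c by (simp_all add: pochhammer_pos)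
    have "(c - 1) * pochhammer c k = pochhammer (c - 1) k * (c - 1 + real k)"
      using pochhammer_rec[of "c - 1" k] pochhammer_Suc[of "c - 1" k] by simp
    then have "(c - 1 + real k) / pochhammer c k = (c - 1) / pochhammer (c - 1) k"
      using pos by (simp add: frac_eq_eq mult.commute)
    then have "((c - 1 + real k) / pochhammer c k) * (pochhammer a k * z ^ k / fact k)
        = (c - 1) * (kummer_coeff a (c - 1) k * z ^ k)"
      by (simp add: kummer_coeff_def)
    moreover have "(c - 1) * (kummer_coeff a c k * z ^ k) + real k * kummer_coeff a c k * z ^ k
        = ((c - 1 + real k) / pochhammer c k) * (pochhammer a k * z ^ k / fact k)"
      using pos by (simp add: kummer_coeff_def field_simps)
    ultimately show ?thesis
      by simp
  qed
  have "(\<lambda>k. (c - 1) * (kummer_coeff a (c - 1) k * z ^ k))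
          sums ((c - 1) * hyp1F1 a c z + z * (a / c * hyp1F1 (a + 1) (c + 1) z))"
    using sums_add[OF sums_mult[OF sums_hyp1F1[OF c(1), of a z], of "c - 1"] deriv]
    by (simp only: termwise)
  moreover have "(\<lambda>k. (c - 1) * (kummer_coeff a (c - 1) k * z ^ k)) sums ((c - 1) * hyp1F1 a (c - 1) z)"
    by (rule sums_mult[OF sums_hyp1F1[OF c(2)]])
  ultimately show ?thesis
    by (rule sums_unique2)
qed

section \<open>Double factorials and the Beta function at half-integers\<close>

declare dfact.simps [simp del]

lemma dfact_nonpos: "m \<le> 0 \<Longrightarrow> dfact m = 1"
  by (subst dfact.simps) simp

lemma dfact_pos_rec: "m > 0 \<Longrightarrow> dfact m = nat m * dfact (m - 2)"
  by (subst dfact.simps) simp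

lemma dfact_pos: "dfact m > 0"
proof (induction m rule: dfact.induct)
  case (1 m)
  then show ?case
    by (cases "m \<le> 0") (auto simp: dfact_nonpos dfact_pos_rec)
qed

lemma dfact_odd: "real (dfact (2 * int j + 1)) = (2 * real j + 1) * real (dfact (2 * int j - 1))"
  by (subst dfact_pos_rec) (auto simp: algebra_simps)

lemma dfact_even: "real (dfact (2 * int j + 2)) = (2 * real j + 2) * real (dfact (2 * int j))"
  by (subst dfact_pos_rec) (auto simp: algebra_simps nat_add_distrib)

lemma Beta_half_half: "Beta (1/2) (1/2) = pi"
  by (simp add: Beta_def Gamma_one_half_real)

lemma pos_notin_nonpos_Ints: "(x::real) > 0 \<Longrightarrow> x \<notin> \<int>\<^sub>\<le>\<^sub>0"
  by (auto dest: nonpos_Ints_nonpos)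

lemma Beta_one_half: "Beta 1 (1/2::real) = 2"
proof -
  have Gamma_3_2: "Gamma (1/2 + 1) = 1/2 * Gamma (1/2::real)"
    by (rule Gamma_plus1) (simp add: pos_notin_nonpos_Ints)
  have "Beta 1 (1/2::real) = Gamma 1 * Gamma (1/2) / Gamma (1/2 + 1)"
    by (simp add: Beta_def add.commute)
  also have "\<dots> = sqrt pi / (1/2 * sqrt pi)"
    unfolding Gamma_3_2 by (simp add: Gamma_one_half_real)
  finally show ?thesis
    by simp
qed

lemma Beta_half_odd: "Beta (real j + 1/2) (1/2) = pi * real (dfact (2 * int j - 1)) / real (dfact (2 * int j))"
proof (induction j)
  case 0
  then show ?case by (simp add: Beta_half_half dfact_nonpos)
next
  case (Suc j)
  have rec: "(real j + 1) * Beta (real j + 1/2 + 1) (1/2) = (real j + 1/2) * Beta (real j + 1/2) (1/2)"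
    using Beta_plus1_left[of "real j + 1/2" "1/2"] by (simp add: pos_notin_nonpos_Ints add_ac)
  have idx: "2 * int j + 2 - 1 = 2 * int j + 1" "2 * int (Suc j) = 2 * int j + 2"
    by simp_all
  have "Beta (real (Suc j) + 1/2) (1/2) = (real j + 1/2) / (real j + 1) * Beta (real j + 1/2) (1/2)"
    using rec by (simp add: field_simps add_ac)
  also have "\<dots> = pi * real (dfact (2 * int (Suc j) - 1)) / real (dfact (2 * int (Suc j)))"
    unfolding Suc.IH idx dfact_odd dfact_even using dfact_pos[of "2 * int j"] by (simp add: field_simps)
  finally show ?case .
qed

lemma Beta_half_even: "Beta (real j + 1) (1/2) = 2 * real (dfact (2 * int j)) / real (dfact (2 * int j + 1))"
proof (induction j)
  case 0
  then show ?case by (simp add: Beta_one_half dfact_nonpos dfact_pos_rec)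
next
  case (Suc j)
  have rec: "(real j + 3/2) * Beta (real j + 1 + 1) (1/2) = (real j + 1) * Beta (real j + 1) (1/2)"
    using Beta_plus1_left[of "real j + 1" "1/2"] by (simp add: pos_notin_nonpos_Ints add_ac)
  have idx: "2 * int (Suc j) = 2 * int j + 2"
    by simp
  have dfact_odd': "real (dfact (2 * int j + 2 + 1)) = (2 * real j + 3) * real (dfact (2 * int j + 1))"
    by (subst dfact_pos_rec) (auto simp: algebra_simps nat_add_distrib)
  have "Beta (real (Suc j) + 1) (1/2) = (real j + 1) / (real j + 3/2) * Beta (real j + 1) (1/2)"
    using rec by (simp add: field_simps add_ac)
  also have "\<dots> = 2 * real (dfact (2 * int (Suc j))) / real (dfact (2 * int (Suc j) + 1))"
    unfolding Suc.IH dfact_odd' idx dfact_even using dfact_pos[of "2 * int j + 1"] by (simp add: field_simps)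
  finally show ?case .
qed

lemma Beta_half_product:
  fixes b :: real
  assumes "b > 1/2"
  shows "(2 * b - 1) * Beta b (1/2) * Beta (b - 1/2) (1/2) = 2 * pi"
proof -
  have Gamma_rec: "Gamma (b + 1/2) = (b - 1/2) * Gamma (b - 1/2)"
    using Gamma_plus1[OF pos_notin_nonpos_Ints, of "b - 1/2"] assms by (simp add: add.commute)
  have pos: "Gamma (b - 1/2) > 0" "Gamma b > 0"
    using assms by auto
  have "(2 * b - 1) * Beta b (1/2) * Beta (b - 1/2) (1/2)
      = (2 * b - 1) * (Gamma b * sqrt pi / ((b - 1/2) * Gamma (b - 1/2))) * (Gamma (b - 1/2) * sqrt pi / Gamma b)"
    by (simp add: Beta_def Gamma_one_half_real Gamma_rec)
  also have "\<dots> = 2 * (sqrt pi * sqrt pi)"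
  proof -
    have "(2 * b - 1) * (G * s / ((b - 1/2) * H)) * (H * s / G) = 2 * (s * s)" if "G > 0" "H > 0" for G H s :: real
      using assms that by (simp add: field_simps)
    then show ?thesis
      using pos by blast
  qed
  finally show ?thesis
    by simp
qed

section \<open>Some explicit integrals\<close>

lemma has_integral_Gamma_half: "((\<lambda>w::real. w powr (-1/2) / exp w) has_integral sqrt pi) {0<..}"
proof -
  have "((\<lambda>w::real. w powr (1/2 - 1) / exp w) has_integral Gamma (1/2)) {0..}"
    by (rule Gamma_integral_real) simp
  then have "((\<lambda>w::real. w powr (-1/2) / exp w) has_integral sqrt pi) {0..}"
    by (simp add: Gamma_one_half_real)
  then show ?thesis
    by (rule has_integral_spike_set_eq[THEN iffD1, rotated 2]) (auto intro!: negligible_subset[OF negligible_empty])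
qed

text \<open>The substitution \<open>u = 1 - 1 / (w / c + 1 / (1 - s))\<close> maps \<open>(0, \<infinity>)\<close> onto \<open>(s, 1)\<close> and
  turns the kernel below into a multiple of the Gamma integrand \<open>w^(-1/2) exp(-w)\<close>.\<close>

lemma abel_kernel_substitution:
  fixes c s w :: real
  assumes c: "c > 0" and s: "s < 1" and w: "w > 0"
  defines "p \<equiv> w / c + 1 / (1 - s)"
  shows "(1/c) / p^2 * ((1 - 1/p - s) powr (-1/2) * (1/p) powr (-3/2) * exp (-c * p))
       = c powr (-1/2) * (1 - s) powr (-1/2) * exp (-c / (1 - s)) * (w powr (-1/2) / exp w)"
proof -
  define \<tau> where "\<tau> = 1 - s"
  have tau: "\<tau> > 0"
    using s by (simp add: \<tau>_def)
  have p: "p > 0"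
    using w c tau unfolding p_def \<tau>_def[symmetric] by (intro add_pos_pos divide_pos_pos) auto
  have "1 - 1/p - s = (\<tau> * p - 1) / p"
    using p by (simp add: \<tau>_def field_simps)
  also have "\<tau> * p - 1 = \<tau> * (w / c)"
    using tau by (simp add: p_def \<tau>_def[symmetric] field_simps)
  finally have shift: "1 - 1/p - s = \<tau> * (w / c) / p" .
  have ex: "exp (-c * p) = exp (-w) * exp (-c / \<tau>)"
    using c by (simp add: p_def \<tau>_def[symmetric] field_simps flip: exp_add)
  have "(\<tau> * (w / c) / p) powr (-1/2) = \<tau> powr (-1/2) * w powr (-1/2) * c powr (1/2) * p powr (1/2)"
    using tau w c p by (simp add: powr_divide powr_mult powr_minus_divide divide_simps)
  moreover have "(1/p) powr (-3/2) = p powr (3/2)"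
    using p by (simp add: powr_divide powr_minus_divide)
  moreover have "p powr (1/2) * p powr (3/2) = p^2"
    using p by (simp flip: powr_add)
  ultimately have powers: "(\<tau> * (w / c) / p) powr (-1/2) * (1/p) powr (-3/2) = \<tau> powr (-1/2) * w powr (-1/2) * c powr (1/2) * p^2"
    by (simp add: algebra_simps)
  have "(1/c) / p^2 * ((1 - 1/p - s) powr (-1/2) * (1/p) powr (-3/2) * exp (-c * p))
      = (1/c) / p^2 * ((\<tau> * (w / c) / p) powr (-1/2) * (1/p) powr (-3/2)) * (exp (-w) * exp (-c / \<tau>))"
    unfolding shift ex by (simp add: mult.assoc)
  also have "\<dots> = (1/c) / p^2 * (\<tau> powr (-1/2) * w powr (-1/2) * c powr (1/2) * p^2) * (exp (-w) * exp (-c / \<tau>))"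
    unfolding powers ..
  finally have lhs: "(1/c) / p^2 * ((1 - 1/p - s) powr (-1/2) * (1/p) powr (-3/2) * exp (-c * p))
      = (1/c) / p^2 * (\<tau> powr (-1/2) * w powr (-1/2) * c powr (1/2) * p^2) * (exp (-w) * exp (-c / \<tau>))" .
  have cc: "c powr (1/2) * c powr (1/2) = c"
    using c by (simp flip: powr_add)
  show ?thesis
    unfolding lhs \<tau>_def[symmetric] using p c cc tau w
    by (simp add: field_simps exp_minus powr_minus_divide)
qed

lemma abel_substitution_image:
  fixes c \<tau> :: real
  assumes c: "c > 0" and tau: "\<tau> > 0"
  shows "(\<lambda>w. 1 - 1 / (w / c + 1 / \<tau>)) ` {0<..} = {1 - \<tau><..<1}"
proof
  show "(\<lambda>w. 1 - 1 / (w / c + 1 / \<tau>)) ` {0<..} \<subseteq> {1 - \<tau><..<1}"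
  proof
    fix u assume "u \<in> (\<lambda>w. 1 - 1 / (w / c + 1 / \<tau>)) ` {0<..}"
    then obtain w where w: "w > 0" "u = 1 - 1 / (w / c + 1 / \<tau>)"
      by auto
    have p: "w / c + 1 / \<tau> > 0"
      using w c tau by (intro add_pos_pos divide_pos_pos) auto
    then have "1 / (w / c + 1 / \<tau>) < \<tau>"
      using tau c w by (simp add: field_simps)
    then show "u \<in> {1 - \<tau><..<1}"
      using p w by simp
  qed
  show "{1 - \<tau><..<1} \<subseteq> (\<lambda>w. 1 - 1 / (w / c + 1 / \<tau>)) ` {0<..}"
  proof
    fix u assume u: "u \<in> {1 - \<tau><..<1}"
    define w where "w = c * (1 / (1 - u) - 1 / \<tau>)"
    have "1 / (1 - u) > 1 / \<tau>"
      using u tau by (auto intro!: divide_strict_left_mono)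
    then have "w > 0"
      using c by (simp add: w_def)
    moreover have "u = 1 - 1 / (w / c + 1 / \<tau>)"
      using c u by (simp add: w_def)
    ultimately show "u \<in> (\<lambda>w. 1 - 1 / (w / c + 1 / \<tau>)) ` {0<..}"
      by blast
  qed
qed

lemma has_integral_change_of_variables_nonneg:
  fixes f g g' h :: "real \<Rightarrow> real"
  assumes S: "S \<in> sets lebesgue"
    and deriv: "\<And>w. w \<in> S \<Longrightarrow> (g has_field_derivative g' w) (at w within S)"
    and inj: "inj_on g S"
    and transformed: "\<And>w. w \<in> S \<Longrightarrow> \<bar>g' w\<bar> * f (g w) = h w"
    and nonneg: "\<And>w. w \<in> S \<Longrightarrow> h w \<ge> 0"
    and integral: "(h has_integral I) S"
  shows "(f has_integral I) (g ` S)"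
proof -
  have "h absolutely_integrable_on S"
    using integral nonneg by (subst absolutely_integrable_on_iff_nonneg) (auto simp: has_integral_integrable)
  then have "(\<lambda>w. \<bar>g' w\<bar> * f (g w)) absolutely_integrable_on S"
    by (rule absolutely_integrable_spike[of _ _ "{}"]) (auto simp: transformed)
  moreover have "integral S (\<lambda>w. \<bar>g' w\<bar> * f (g w)) = I"
    using integral_cong[of S "\<lambda>w. \<bar>g' w\<bar> * f (g w)" h] transformed integral by (simp add: integral_unique)
  ultimately have "f absolutely_integrable_on (g ` S) \<and> integral (g ` S) f = I"
    using has_absolute_integral_change_of_variables_1'[OF S deriv inj] by blast
  then show ?thesis
    by (metis absolutely_integrable_on_def has_integral_integral)
qed

lemma has_integral_abel_kernel:
  fixes c s :: real
  assumes c: "c > 0" and s: "s < 1"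
  shows "((\<lambda>u. (u - s) powr (-1/2) * (1 - u) powr (-3/2) * exp (-c / (1 - u))) has_integral
           (sqrt pi / sqrt c * (1 - s) powr (-1/2) * exp (-c / (1 - s)))) {s<..<1}"
proof -
  define \<tau> where "\<tau> = 1 - s"
  have tau: "\<tau> > 0"
    using s by (simp add: \<tau>_def)
  define K where "K = c powr (-1/2) * \<tau> powr (-1/2) * exp (-c / \<tau>)"
  define g where "g = (\<lambda>w::real. 1 - 1 / (w / c + 1 / \<tau>))"
  define g' where "g' = (\<lambda>w::real. (1/c) / (w / c + 1 / \<tau>)^2)"
  have p_pos: "w / c + 1 / \<tau> > 0" if "w > 0" for w
    using that c tau by (intro add_pos_pos divide_pos_pos) auto
  have "((\<lambda>u. (u - s) powr (-1/2) * (1 - u) powr (-3/2) * exp (-c / (1 - u))) has_integral K * sqrt pi) (g ` {0<..})"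
  proof (rule has_integral_change_of_variables_nonneg)
    show "(g has_field_derivative g' w) (at w within {0<..})" if "w \<in> {0<..}" for w
      using p_pos[of w] that unfolding g_def g'_def
      by (auto intro!: derivative_eq_intros simp: field_simps power2_eq_square)
    show "inj_on g {0<..}"
      using c by (auto intro!: inj_onI simp: g_def)
    show "\<bar>g' w\<bar> * ((g w - s) powr (-1/2) * (1 - g w) powr (-3/2) * exp (-c / (1 - g w)))
        = K * (w powr (-1/2) / exp w)" if "w \<in> {0<..}" for w
      using abel_kernel_substitution[of c s w] that c s p_pos[of w]
      by (simp add: g_def g'_def K_def \<tau>_def)
    show "((\<lambda>w. K * (w powr (-1/2) / exp w)) has_integral K * sqrt pi) {0<..}"
      by (intro has_integral_mult_right has_integral_Gamma_half)
  qed (auto simp: K_def sets_completionI_sets borel_open)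
  moreover have "g ` {0<..} = {s<..<1}"
    using abel_substitution_image[OF c tau] by (simp add: g_def \<tau>_def)
  moreover have "K * sqrt pi = sqrt pi / sqrt c * (1 - s) powr (-1/2) * exp (-c / (1 - s))"
    using c by (simp add: K_def \<tau>_def powr_minus_divide powr_half_sqrt)
  ultimately show ?thesis
    by simp
qed

lemma nn_integral_FTC_nonneg:
  fixes F f :: "real \<Rightarrow> real"
  assumes "a \<le> b"
    and deriv: "\<And>x. x \<in> {a..b} \<Longrightarrow> (F has_real_derivative f x) (at x)"
    and nonneg: "\<And>x. x \<in> {a..b} \<Longrightarrow> f x \<ge> 0"
  shows "F a \<le> F b \<and> (\<integral>\<^sup>+x. ennreal (f x) * indicator {a..b} x \<partial>lborel) = ennreal (F b - F a)"
proof -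
  have FTC: "(f has_integral (F b - F a)) {a..b}"
    using assms(1) by (rule fundamental_theorem_of_calculus)
      (auto intro!: has_field_derivative_at_within deriv
            simp: has_real_derivative_iff_has_vector_derivative[symmetric])
  then have "F b - F a \<ge> 0"
    by (rule has_integral_nonneg) (use nonneg in auto)
  moreover have "(\<integral>\<^sup>+x. ennreal (f x) * indicator {a..b} x \<partial>lborel) = ennreal (F b - F a)"
    using FTC by (rule nn_integral_has_integral_lebesgue'[rotated]) (use nonneg in auto)
  ultimately show ?thesis
    by simp
qed

lemma nn_integral_Beta_real:
  fixes p q :: real
  assumes "p > 0" and "q > 0"
  shows "(\<integral>\<^sup>+x. ennreal (x powr (p - 1) * (1 - x) powr (q - 1)) * indicator {0<..<1} x \<partial>lborel)
       = ennreal (Beta p q)"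
proof -
  have "((\<lambda>x. x powr (p - 1) * (1 - x) powr (q - 1)) has_integral Beta p q) {0<..<1}"
    using has_integral_Beta_real[OF assms] by (simp add: has_integral_Icc_iff_Ioo)
  then show ?thesis
    by (rule nn_integral_has_integral_lebesgue'[rotated]) auto
qed

lemma nn_integral_Beta_real_scaled:
  fixes p q u :: real
  assumes p: "p > 0" and q: "q > 0" and u: "u > 0"
  shows "(\<integral>\<^sup>+s. ennreal (s powr (p - 1) * (u - s) powr (q - 1)) * indicator {0<..<u} s \<partial>lborel)
       = ennreal (u powr (p + q - 1) * Beta p q)"
proof -
  have rescale: "ennreal ((u * x) powr (p - 1) * (u - u * x) powr (q - 1)) * indicator {0<..<u} (u * x)
      = ennreal (u powr (p - 1) * u powr (q - 1)) * (ennreal (x powr (p - 1) * (1 - x) powr (q - 1)) * indicator {0<..<1} x)"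
    for x
  proof (cases "x \<in> {0<..<1}")
    case True
    then have "0 < u * x" "u * x < u" "u - u * x = u * (1 - x)"
      using u by (auto simp: algebra_simps)
    then show ?thesis
      using True u by (simp add: powr_mult ennreal_mult'[symmetric] mult_ac)
  next
    case False
    then have "u * x \<notin> {0<..<u}"
      using u by (auto simp: zero_less_mult_iff mult_less_cancel_left1)
    then show ?thesis
      using False by simp
  qed
  have "(\<integral>\<^sup>+s. ennreal (s powr (p - 1) * (u - s) powr (q - 1)) * indicator {0<..<u} s \<partial>lborel)
      = ennreal u * (\<integral>\<^sup>+x. ennreal ((u * x) powr (p - 1) * (u - u * x) powr (q - 1)) * indicator {0<..<u} (u * x) \<partial>lborel)"
    using u by (subst nn_integral_real_affine[where c = u and t = 0]) auto
  also have "\<dots> = ennreal u * (ennreal (u powr (p - 1) * u powr (q - 1)) * ennreal (Beta p q))"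
    by (simp only: rescale, subst nn_integral_cmult) (auto simp: nn_integral_Beta_real[OF p q])
  also have "\<dots> = ennreal (u powr (p + q - 1) * Beta p q)"
  proof -
    have "u * (u powr (p - 1) * u powr (q - 1)) = u powr (p + q - 1)"
      using u by (simp add: powr_add[symmetric] powr_mult_base)
    moreover have "Beta p q \<ge> 0"
      using p q by (simp add: Beta_def)
    ultimately show ?thesis
      using u by (simp add: ennreal_mult'[symmetric] mult.assoc[symmetric])
  qed
  finally show ?thesis .
qed

lemma nn_integral_abel_kernel:
  fixes c s :: real
  assumes "c > 0" and "s < 1"
  shows "(\<integral>\<^sup>+u. ennreal ((u - s) powr (-1/2) * (1 - u) powr (-3/2) * exp (-c / (1 - u))) * indicator {s<..<1} u \<partial>lborel)
       = ennreal (sqrt pi / sqrt c * (1 - s) powr (-1/2) * exp (-c / (1 - s)))"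
  by (rule nn_integral_has_integral_lebesgue'[OF _ has_integral_abel_kernel[OF assms]]) auto

lemma nn_integral_triangle_swap:
  fixes k :: "real \<Rightarrow> real \<Rightarrow> ennreal"
  assumes k [measurable]: "(\<lambda>(s, u). k s u) \<in> borel_measurable (lborel \<Otimes>\<^sub>M lborel)"
  shows "(\<integral>\<^sup>+u. (\<integral>\<^sup>+s. k s u * indicator {0<..<u} s \<partial>lborel) * indicator {0<..<1} u \<partial>lborel)
       = (\<integral>\<^sup>+s. (\<integral>\<^sup>+u. k s u * indicator {s<..<1} u \<partial>lborel) * indicator {0<..<1} s \<partial>lborel)"
proof -
  define T :: "real \<Rightarrow> real \<Rightarrow> ennreal" where "T s u = (if 0 < s \<and> s < u \<and> u < 1 then 1 else 0)" for s u
  have T_left: "T s u = indicator {0<..<u} s * indicator {0<..<1} u" for s u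
    by (auto simp: T_def indicator_def)
  have T_right: "T s u = indicator {s<..<1} u * indicator {0<..<1} s" for s u
    by (auto simp: T_def indicator_def)
  have [measurable]: "(\<lambda>(s, u). T s u) \<in> borel_measurable (lborel \<Otimes>\<^sub>M lborel)"
    unfolding T_def by (simp add: case_prod_unfold) measurable
  have [measurable]: "(\<lambda>s. k s u) \<in> borel_measurable lborel" "(\<lambda>u. k s u) \<in> borel_measurable lborel" for s u
    by measurable
  have "(\<integral>\<^sup>+u. (\<integral>\<^sup>+s. k s u * indicator {0<..<u} s \<partial>lborel) * indicator {0<..<1} u \<partial>lborel)
      = (\<integral>\<^sup>+u. (\<integral>\<^sup>+s. k s u * T s u \<partial>lborel) \<partial>lborel)"
    unfolding T_left mult.assoc[symmetric] by (subst nn_integral_multc) auto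
  also have "\<dots> = (\<integral>\<^sup>+s. (\<integral>\<^sup>+u. k s u * T s u \<partial>lborel) \<partial>lborel)"
    by (rule lborel_pair.Fubini'[symmetric]) (simp add: case_prod_unfold)
  also have "\<dots> = (\<integral>\<^sup>+s. (\<integral>\<^sup>+u. k s u * indicator {s<..<1} u \<partial>lborel) * indicator {0<..<1} s \<partial>lborel)"
    unfolding T_right mult.assoc[symmetric] by (subst nn_integral_multc) auto
  finally show ?thesis .
qed

section \<open>The integrals \<open>F\<close> and \<open>G\<close>\<close>

text \<open>Kept in \<open>ennreal\<close> so that Tonelli's theorem applies without integrability side
  conditions.\<close>

definition beta_gauss_F :: "real \<Rightarrow> real \<Rightarrow> ennreal" where
  "beta_gauss_F b z = (\<integral>\<^sup>+u. ennreal (u powr (b - 1) * (1 - u) powr (-1/2) * exp (-(z^2) / (1 - u)))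
                           * indicator {0<..<1} u \<partial>lborel)"

definition beta_gauss_G :: "real \<Rightarrow> real \<Rightarrow> ennreal" where
  "beta_gauss_G b z = (\<integral>\<^sup>+u. ennreal (u powr (b - 1) * (1 - u) powr (-3/2) * exp (-(z^2) / (1 - u)))
                           * indicator {0<..<1} u \<partial>lborel)"

lemma beta_gauss_F_zero: "b > 0 \<Longrightarrow> beta_gauss_F b 0 = ennreal (Beta b (1/2))"
  using nn_integral_Beta_real[of b "1/2"] by (simp add: beta_gauss_F_def)

lemma nn_integral_gauss_derivative:
  fixes u z :: real
  assumes "u < 1" and "z \<ge> 0"
  shows "(\<integral>\<^sup>+\<eta>. ennreal (2 * \<eta> / (1 - u) * exp (-(\<eta>^2) / (1 - u))) * indicator {0..z} \<eta> \<partial>lborel)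
       = ennreal (1 - exp (-(z^2) / (1 - u)))"
proof -
  have "(1 - u) * (1 - u) > 0"
    using assms by simp
  then have "1 + u * u - u * 2 \<noteq> 0"
    by (simp add: algebra_simps)
  then have "(\<integral>\<^sup>+\<eta>. ennreal (2 * \<eta> / (1 - u) * exp (-(\<eta>^2) / (1 - u))) * indicator {0..z} \<eta> \<partial>lborel)
      = ennreal (- exp (-(z^2) / (1 - u)) - - exp (-(0^2) / (1 - u)))"
    using assms by (intro nn_integral_FTC_nonneg[THEN conjunct2])
      (auto intro!: derivative_eq_intros simp: field_simps)
  then show ?thesis
    by simp
qed

lemma beta_gauss_integrand_decrease:
  fixes b u z :: real
  assumes u: "u \<in> {0<..<1}" and z: "z \<ge> 0"
  shows "ennreal (u powr (b - 1) * (1 - u) powr (-1/2) * (1 - exp (-(z^2) / (1 - u))))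
       = (\<integral>\<^sup>+\<eta>. ennreal (2 * \<eta>) * ennreal (u powr (b - 1) * (1 - u) powr (-3/2) * exp (-(\<eta>^2) / (1 - u)))
                 * indicator {0..z} \<eta> \<partial>lborel)"
proof -
  define k where "k = u powr (b - 1) * (1 - u) powr (-1/2)"
  have pointwise: "ennreal (2 * \<eta>) * ennreal (u powr (b - 1) * (1 - u) powr (-3/2) * exp (-(\<eta>^2) / (1 - u))) * indicator {0..z} \<eta>
      = ennreal k * (ennreal (2 * \<eta> / (1 - u) * exp (-(\<eta>^2) / (1 - u))) * indicator {0..z} \<eta>)" for \<eta>
  proof (cases "\<eta> \<in> {0..z}")
    case True
    have "(1 - u) powr (-3/2) = (1 - u) powr (-1/2) / (1 - u)"
      using u powr_diff[of "1 - u" "-1/2" 1] by simp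
    then have "2 * \<eta> * (u powr (b - 1) * (1 - u) powr (-3/2) * exp (-(\<eta>^2) / (1 - u)))
        = k * (2 * \<eta> / (1 - u) * exp (-(\<eta>^2) / (1 - u)))"
      by (simp add: k_def field_simps)
    then show ?thesis
      using u True by (simp add: k_def ennreal_mult'[symmetric] mult.assoc)
  qed simp
  have "(\<integral>\<^sup>+\<eta>. ennreal (2 * \<eta>) * ennreal (u powr (b - 1) * (1 - u) powr (-3/2) * exp (-(\<eta>^2) / (1 - u)))
                 * indicator {0..z} \<eta> \<partial>lborel)
      = ennreal k * (\<integral>\<^sup>+\<eta>. ennreal (2 * \<eta> / (1 - u) * exp (-(\<eta>^2) / (1 - u))) * indicator {0..z} \<eta> \<partial>lborel)"
    unfolding pointwise by (rule nn_integral_cmult) simp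
  also have "\<dots> = ennreal k * ennreal (1 - exp (-(z^2) / (1 - u)))"
    using u z by (subst nn_integral_gauss_derivative) auto
  finally show ?thesis
    using u by (simp add: k_def ennreal_mult'[symmetric])
qed

text \<open>Writing \<open>1 - exp(-z^2/(1-u))\<close> as an integral over \<open>\<eta> \<in> [0, z]\<close> and exchanging the order
  of integration gives the integrated form of \<open>\<partial>F/\<partial>z = -2z G\<close>.\<close>

lemma beta_gauss_F_decrease:
  fixes b z :: real
  assumes b: "b > 0" and z: "z \<ge> 0"
  shows "beta_gauss_F b 0 = beta_gauss_F b z
           + (\<integral>\<^sup>+\<eta>. ennreal (2 * \<eta>) * beta_gauss_G b \<eta> * indicator {0..z} \<eta> \<partial>lborel)"
proof -
  define k where "k u = u powr (b - 1) * (1 - u) powr (-1/2)" for u :: real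
  define e where "e u = exp (-(z^2) / (1 - u))" for u :: real
  define g where "g u \<eta> = u powr (b - 1) * (1 - u) powr (-3/2) * exp (-(\<eta>^2) / (1 - u))" for u \<eta> :: real
  have split: "ennreal (k u) * indicator {0<..<1} u
      = ennreal (k u * e u) * indicator {0<..<1} u + ennreal (k u * (1 - e u)) * indicator {0<..<1} u" for u
  proof (cases "u \<in> {0<..<1}")
    case True
    then have "e u \<le> 1" "k u \<ge> 0" "e u \<ge> 0"
      using z by (simp_all add: e_def k_def)
    then show ?thesis
      using True by (simp add: ennreal_plus[symmetric] algebra_simps mult_left_le_one_le)
  qed simp
  have tail: "ennreal (k u * (1 - e u)) * indicator {0<..<1} u
      = (\<integral>\<^sup>+\<eta>. ennreal (2 * \<eta>) * ennreal (g u \<eta>) * indicator {0..z} \<eta> * indicator {0<..<1} u \<partial>lborel)" for u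
    using beta_gauss_integrand_decrease[of u z b] z
    by (cases "u \<in> {0<..<1}") (simp_all add: k_def e_def g_def)
  have "beta_gauss_F b 0 = (\<integral>\<^sup>+u. ennreal (k u) * indicator {0<..<1} u \<partial>lborel)"
    by (simp add: beta_gauss_F_def k_def)
  also have "\<dots> = beta_gauss_F b z + (\<integral>\<^sup>+u. ennreal (k u * (1 - e u)) * indicator {0<..<1} u \<partial>lborel)"
    unfolding split by (subst nn_integral_add) (auto simp: beta_gauss_F_def k_def e_def mult.assoc)
  also have "(\<integral>\<^sup>+u. ennreal (k u * (1 - e u)) * indicator {0<..<1} u \<partial>lborel)
      = (\<integral>\<^sup>+\<eta>. (\<integral>\<^sup>+u. ennreal (2 * \<eta>) * ennreal (g u \<eta>) * indicator {0..z} \<eta> * indicator {0<..<1} u \<partial>lborel) \<partial>lborel)"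
    unfolding tail by (rule lborel_pair.Fubini'[symmetric]) (simp add: g_def case_prod_unfold)
  also have "\<dots> = (\<integral>\<^sup>+\<eta>. ennreal (2 * \<eta>) * beta_gauss_G b \<eta> * indicator {0..z} \<eta> \<partial>lborel)"
  proof (rule nn_integral_cong)
    fix \<eta> :: real
    have "(\<integral>\<^sup>+u. ennreal (2 * \<eta>) * ennreal (g u \<eta>) * indicator {0..z} \<eta> * indicator {0<..<1} u \<partial>lborel)
        = (\<integral>\<^sup>+u. (ennreal (g u \<eta>) * indicator {0<..<1} u) * (ennreal (2 * \<eta>) * indicator {0..z} \<eta>) \<partial>lborel)"
      by (rule nn_integral_cong) (simp only: mult_ac)
    also have "\<dots> = beta_gauss_G b \<eta> * (ennreal (2 * \<eta>) * indicator {0..z} \<eta>)"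
      unfolding beta_gauss_G_def g_def by (rule nn_integral_multc) simp
    finally show "(\<integral>\<^sup>+u. ennreal (2 * \<eta>) * ennreal (g u \<eta>) * indicator {0..z} \<eta> * indicator {0<..<1} u \<partial>lborel)
        = ennreal (2 * \<eta>) * beta_gauss_G b \<eta> * indicator {0..z} \<eta>"
      by (simp only: mult_ac)
  qed
  finally show ?thesis .
qed

lemma beta_gauss_G_half:
  fixes \<eta> :: real
  assumes "\<eta> > 0"
  shows "ennreal (2 * \<eta>) * beta_gauss_G (1/2) \<eta> = ennreal (2 * sqrt pi * exp (-(\<eta>^2)))"
proof -
  have "beta_gauss_G (1/2) \<eta> = ennreal (sqrt pi / sqrt (\<eta>^2) * (1 - 0) powr (-1/2) * exp (-(\<eta>^2) / (1 - 0)))"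
    unfolding beta_gauss_G_def using nn_integral_abel_kernel[of "\<eta>^2" 0] assms by simp
  then show ?thesis
    using assms by (simp add: ennreal_mult'[symmetric])
qed

text \<open>Write \<open>u^(b-1)\<close> as a Beta integral over \<open>s \<in> (0, u)\<close>, swap the integrals, and integrate out
  \<open>u \<in> (s, 1)\<close> with the kernel integral: this trades the extra factor \<open>(1 - u)^(-1)\<close> of \<open>G\<close>
  for a drop of one half in the exponent \<open>b\<close>.\<close>

lemma beta_gauss_G_recursion:
  fixes b \<eta> :: real
  assumes b: "b > 1/2" and eta: "\<eta> > 0"
  shows "ennreal (2 * \<eta>) * beta_gauss_G b \<eta>
       = ennreal (2 * sqrt pi / Beta (b - 1/2) (1/2)) * beta_gauss_F (b - 1/2) \<eta>"
proof -
  define B where "B = Beta (b - 1/2) (1/2)"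
  have B: "B > 0"
    using b by (simp add: B_def Beta_def)
  define L where "L u = (1 - u) powr (-3/2) * exp (-(\<eta>^2) / (1 - u))" for u :: real
  define k where "k s u = ennreal (s powr (b - 3/2) / B) * ennreal ((u - s) powr (-1/2) * L u)" for s u :: real
  have k_measurable: "(\<lambda>(s, u). k s u) \<in> borel_measurable (lborel \<Otimes>\<^sub>M lborel)"
    unfolding k_def L_def by measurable
  have beta_u: "ennreal (u powr (b - 1) * L u) * indicator {0<..<1} u
      = (\<integral>\<^sup>+s. k s u * indicator {0<..<u} s \<partial>lborel) * indicator {0<..<1} u" for u
  proof (cases "u \<in> {0<..<1}")
    case True
    have "k s u * indicator {0<..<u} s
        = ennreal (L u / B) * (ennreal (s powr ((b - 1/2) - 1) * (u - s) powr (1/2 - 1)) * indicator {0<..<u} s)" for s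
      using B by (cases "s \<in> {0<..<u}") (auto simp: k_def L_def ennreal_mult'[symmetric] mult_ac)
    then have "(\<integral>\<^sup>+s. k s u * indicator {0<..<u} s \<partial>lborel)
        = ennreal (L u / B) * (\<integral>\<^sup>+s. ennreal (s powr ((b - 1/2) - 1) * (u - s) powr (1/2 - 1)) * indicator {0<..<u} s \<partial>lborel)"
      by (simp only:) (rule nn_integral_cmult, simp)
    also have "\<dots> = ennreal (L u / B) * ennreal (u powr ((b - 1/2) + 1/2 - 1) * B)"
      unfolding B_def using True b by (subst nn_integral_Beta_real_scaled) auto
    finally have "(\<integral>\<^sup>+s. k s u * indicator {0<..<u} s \<partial>lborel) = ennreal (L u / B) * ennreal (u powr (b - 1) * B)"
      by simp
    then show ?thesis
      using True B by (simp add: L_def ennreal_mult'[symmetric] field_simps)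
  qed simp
  have abel_s: "(\<integral>\<^sup>+u. k s u * indicator {s<..<1} u \<partial>lborel) * indicator {0<..<1} s
      = ennreal (sqrt pi / (\<eta> * B))
        * (ennreal (s powr ((b - 1/2) - 1) * (1 - s) powr (-1/2) * exp (-(\<eta>^2) / (1 - s))) * indicator {0<..<1} s)" for s
  proof (cases "s \<in> {0<..<1}")
    case True
    have "(\<integral>\<^sup>+u. k s u * indicator {s<..<1} u \<partial>lborel)
        = ennreal (s powr (b - 3/2) / B) * ennreal (sqrt pi / sqrt (\<eta>^2) * (1 - s) powr (-1/2) * exp (-(\<eta>^2) / (1 - s)))"
      unfolding k_def L_def mult.assoc
      using True eta nn_integral_abel_kernel[of "\<eta>^2" s] by (subst nn_integral_cmult) (auto simp: mult.assoc)
    then show ?thesis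
      using True eta B by (simp add: ennreal_mult'[symmetric] mult_ac)
  qed simp
  have "beta_gauss_G b \<eta> = (\<integral>\<^sup>+u. ennreal (u powr (b - 1) * L u) * indicator {0<..<1} u \<partial>lborel)"
    by (simp add: beta_gauss_G_def L_def mult.assoc)
  also have "\<dots> = (\<integral>\<^sup>+u. (\<integral>\<^sup>+s. k s u * indicator {0<..<u} s \<partial>lborel) * indicator {0<..<1} u \<partial>lborel)"
    unfolding beta_u ..
  also have "\<dots> = ennreal (sqrt pi / (\<eta> * B)) * beta_gauss_F (b - 1/2) \<eta>"
    unfolding nn_integral_triangle_swap[OF k_measurable] abel_s beta_gauss_F_def
    by (rule nn_integral_cmult) simp
  finally show ?thesis
    using B eta by (simp add: B_def mult.assoc[symmetric] ennreal_mult'[symmetric])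
qed

section \<open>Identification of \<open>F\<close> with the confluent hypergeometric bracket\<close>

text \<open>\<open>kummer_R (n / 2)\<close> is the bracket in the closed form of \<open>w\<^sub>n\<close>.\<close>

definition kummer_R :: "real \<Rightarrow> real \<Rightarrow> real" where
  "kummer_R b z = Beta b (1/2) * hyp1F1 (1/2 - b) (1/2) (-(z^2))
                  - 2 * sqrt pi * z * hyp1F1 (1 - b) (3/2) (-(z^2))"

lemma kummer_R_zero: "kummer_R b 0 = Beta b (1/2)"
  by (simp add: kummer_R_def)

lemma has_real_derivative_kummer_R:
  "(kummer_R b has_real_derivative
     (4 * b - 2) * Beta b (1/2) * z * hyp1F1 (3/2 - b) (3/2) (-(z^2))
     - 2 * sqrt pi * hyp1F1 (1 - b) (1/2) (-(z^2))) (at z)"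
proof -
  have chain_rule: "(kummer_R b has_real_derivative
      Beta b (1/2) * ((1/2 - b) / (1/2) * hyp1F1 (1/2 - b + 1) (1/2 + 1) (-(z^2)) * (- (2 * z)))
      - 2 * sqrt pi * (1 * hyp1F1 (1 - b) (3/2) (-(z^2))
          + z * ((1 - b) / (3/2) * hyp1F1 (1 - b + 1) (3/2 + 1) (-(z^2)) * (- (2 * z))))) (at z)"
    unfolding kummer_R_def[abs_def] by (auto intro!: derivative_eq_intros simp: field_simps)
  have contiguous: "1 * hyp1F1 (1 - b) (3/2) (-(z^2))
      + z * ((1 - b) / (3/2) * hyp1F1 (1 - b + 1) (3/2 + 1) (-(z^2)) * (- (2 * z)))
      = hyp1F1 (1 - b) (1/2) (-(z^2))"
    using hyp1F1_contiguous[of "3/2" "1 - b" "-(z^2)"] by (simp add: algebra_simps power2_eq_square)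
  show ?thesis
    using chain_rule unfolding contiguous by (simp add: algebra_simps)
qed

lemma kummer_R_half_deriv: "(kummer_R (1/2) has_real_derivative - (2 * sqrt pi * exp (-(z^2)))) (at z)"
  using has_real_derivative_kummer_R[of "1/2" z] by (simp add: hyp1F1_same_params)

lemma kummer_R_deriv_recursion:
  fixes b z :: real
  assumes b: "b > 1/2"
  shows "(kummer_R b has_real_derivative - (2 * sqrt pi / Beta (b - 1/2) (1/2) * kummer_R (b - 1/2) z)) (at z)"
proof -
  have B: "Beta (b - 1/2) (1/2) > 0"
    using b by (simp add: Beta_def)
  have Beta_rel: "(4 * b - 2) * Beta b (1/2) = 4 * pi / Beta (b - 1/2) (1/2)"
    using Beta_half_product[OF b] B by (simp add: field_simps)
  have params: "1/2 - (b - 1/2) = 1 - b" "1 - (b - 1/2) = 3/2 - b"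
    by simp_all
  have "(4 * b - 2) * Beta b (1/2) * z * hyp1F1 (3/2 - b) (3/2) (-(z^2)) - 2 * sqrt pi * hyp1F1 (1 - b) (1/2) (-(z^2))
      = - (2 * sqrt pi / Beta (b - 1/2) (1/2) * kummer_R (b - 1/2) z)"
    unfolding Beta_rel kummer_R_def params using B by (simp add: field_simps)
  then show ?thesis
    using has_real_derivative_kummer_R[of b z] by simp
qed

text \<open>The identity \<open>F b 0 = F b z + (\<Phi> 0 - \<Phi> z)\<close> first holds in \<open>ennreal\<close>; that \<open>F b z\<close> is
  finite and equal to \<open>\<Phi> z \<ge> 0\<close> is read off from it.\<close>

lemma beta_gauss_F_eq_antiderivative:
  fixes b z :: real and \<Phi> h :: "real \<Rightarrow> real"
  assumes b: "b > 0" and z: "z \<ge> 0"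
    and \<Phi>_zero: "\<Phi> 0 = Beta b (1/2)"
    and deriv: "\<And>\<eta>. \<eta> \<in> {0..z} \<Longrightarrow> (\<Phi> has_real_derivative - h \<eta>) (at \<eta>)"
    and nonneg: "\<And>\<eta>. \<eta> \<in> {0..z} \<Longrightarrow> h \<eta> \<ge> 0"
    and G_eq: "\<And>\<eta>. \<eta> \<in> {0<..z} \<Longrightarrow> ennreal (2 * \<eta>) * beta_gauss_G b \<eta> = ennreal (h \<eta>)"
  shows "beta_gauss_F b z = ennreal (\<Phi> z) \<and> \<Phi> z \<ge> 0"
proof -
  have FTC: "- \<Phi> 0 \<le> - \<Phi> z \<and> (\<integral>\<^sup>+\<eta>. ennreal (h \<eta>) * indicator {0..z} \<eta> \<partial>lborel) = ennreal (- \<Phi> z - - \<Phi> 0)"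
    using z by (rule nn_integral_FTC_nonneg) (use DERIV_minus[OF deriv] nonneg in auto)
  have "(\<integral>\<^sup>+\<eta>. ennreal (2 * \<eta>) * beta_gauss_G b \<eta> * indicator {0..z} \<eta> \<partial>lborel)
      = (\<integral>\<^sup>+\<eta>. ennreal (h \<eta>) * indicator {0..z} \<eta> \<partial>lborel)"
  proof (rule nn_integral_cong_AE)
    show "AE \<eta> in lborel. ennreal (2 * \<eta>) * beta_gauss_G b \<eta> * indicator {0..z} \<eta> = ennreal (h \<eta>) * indicator {0..z} \<eta>"
      using AE_lborel_singleton[of 0] by eventually_elim (auto simp: G_eq indicator_def)
  qed
  then have sum: "ennreal (\<Phi> 0) = beta_gauss_F b z + ennreal (\<Phi> 0 - \<Phi> z)"
    using beta_gauss_F_decrease[OF b z] beta_gauss_F_zero[OF b] FTC \<Phi>_zero by simp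
  have "beta_gauss_F b z = ennreal (\<Phi> 0) - ennreal (\<Phi> 0 - \<Phi> z)"
    by (simp add: sum)
  also have "\<dots> = ennreal (\<Phi> z)"
    using FTC by (simp add: ennreal_minus)
  finally have F_eq: "beta_gauss_F b z = ennreal (\<Phi> z)" .
  have "\<Phi> 0 \<ge> 0"
    using b by (simp add: \<Phi>_zero Beta_def)
  moreover have "ennreal (\<Phi> 0 - \<Phi> z) \<le> ennreal (\<Phi> 0)"
    using sum by simp
  ultimately have "\<Phi> 0 - \<Phi> z \<le> \<Phi> 0"
    by (simp add: ennreal_le_iff)
  with F_eq show ?thesis
    by simp
qed

lemma beta_gauss_F_eq_kummer_R:
  fixes n :: nat and z :: real
  assumes "n \<ge> 1" and "z \<ge> 0"
  shows "beta_gauss_F (real n / 2) z = ennreal (kummer_R (real n / 2) z) \<and> kummer_R (real n / 2) z \<ge> 0"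
  using assms
proof (induction n arbitrary: z rule: nat_induct_at_least)
  case base
  show ?case
    using base beta_gauss_G_half kummer_R_half_deriv
    by (intro beta_gauss_F_eq_antiderivative[where h = "\<lambda>\<eta>. 2 * sqrt pi * exp (-(\<eta>^2))"])
       (auto simp: kummer_R_zero)
next
  case (Suc n)
  define b where "b = real (Suc n) / 2"
  have b: "b > 1/2" and b_pred: "b - 1/2 = real n / 2"
    using Suc by (simp_all add: b_def field_simps)
  define c where "c = 2 * sqrt pi / Beta (b - 1/2) (1/2)"
  have c: "c > 0"
    using b by (simp add: c_def Beta_def)
  have IH: "beta_gauss_F (b - 1/2) \<eta> = ennreal (kummer_R (b - 1/2) \<eta>) \<and> kummer_R (b - 1/2) \<eta> \<ge> 0"
    if "\<eta> \<ge> 0" for \<eta>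
    unfolding b_pred using Suc.IH that Suc.hyps by simp
  have "beta_gauss_F b z = ennreal (kummer_R b z) \<and> kummer_R b z \<ge> 0"
  proof (rule beta_gauss_F_eq_antiderivative[where h = "\<lambda>\<eta>. c * kummer_R (b - 1/2) \<eta>"])
    show "ennreal (2 * \<eta>) * beta_gauss_G b \<eta> = ennreal (c * kummer_R (b - 1/2) \<eta>)" if "\<eta> \<in> {0<..z}" for \<eta>
      using beta_gauss_G_recursion[OF b, of \<eta>, folded c_def] IH[of \<eta>] that c by (simp add: ennreal_mult)
    show "(kummer_R b has_real_derivative - (c * kummer_R (b - 1/2) \<eta>)) (at \<eta>)" for \<eta>
      using kummer_R_deriv_recursion[OF b, of \<eta>] by (simp add: c_def)
    show "c * kummer_R (b - 1/2) \<eta> \<ge> 0" if "\<eta> \<in> {0..z}" for \<eta>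
      using IH[of \<eta>] that c by simp
  qed (use b Suc.prems in \<open>auto simp: kummer_R_zero\<close>)
  then show ?case
    by (simp add: b_def)
qed

section \<open>The iterates \<open>w\<^sub>n\<close>\<close>

lemma heat_history_rescaled:
  fixes gam x t0 \<tau> y :: real and m :: nat
  assumes gam: "gam > 0" and tau: "\<tau> > 0" and y: "y \<in> {0<..<1}"
  shows "(\<tau> * y) powr ((real m - 1) / 2) / sqrt (\<tau> - \<tau> * y) * exp (-(x^2) / (4 * gam * (\<tau> - \<tau> * y)))
       = \<tau> powr (real m / 2 - 1) * (y powr ((real m + 1) / 2 - 1) * (1 - y) powr (-1/2)
           * exp (-((x / sqrt (4 * gam * \<tau>))^2) / (1 - y)))"
proof -
  have diff: "\<tau> - \<tau> * y = \<tau> * (1 - y)"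
    by (simp add: algebra_simps)
  have A: "(\<tau> * y) powr ((real m - 1) / 2) = \<tau> powr ((real m - 1) / 2) * y powr ((real m + 1) / 2 - 1)"
    using tau y by (simp add: powr_mult diff_divide_distrib)
  have B: "1 / sqrt (\<tau> - \<tau> * y) = \<tau> powr (-1/2) * (1 - y) powr (-1/2)"
    unfolding diff using tau y by (simp add: powr_half_sqrt[symmetric] powr_mult powr_minus_divide)
  have C: "x^2 / (4 * gam * (\<tau> - \<tau> * y)) = (x / sqrt (4 * gam * \<tau>))^2 / (1 - y)"
    unfolding diff using tau y gam by (simp add: power_divide)
  have D: "\<tau> powr ((real m - 1) / 2) * \<tau> powr (-1/2) = \<tau> powr (real m / 2 - 1)"
  proof -
    have "(real m - 1) / 2 + -1/2 = real m / 2 - 1"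
      by (simp add: field_simps)
    then show ?thesis
      by (simp only: powr_add[symmetric])
  qed
  have "(\<tau> * y) powr ((real m - 1) / 2) / sqrt (\<tau> - \<tau> * y) * exp (-(x^2) / (4 * gam * (\<tau> - \<tau> * y)))
      = (\<tau> * y) powr ((real m - 1) / 2) * (1 / sqrt (\<tau> - \<tau> * y)) * exp (-(x^2 / (4 * gam * (\<tau> - \<tau> * y))))"
    by simp
  also have "\<dots> = (\<tau> powr ((real m - 1) / 2) * \<tau> powr (-1/2)) * (y powr ((real m + 1) / 2 - 1) * (1 - y) powr (-1/2)
           * exp (-((x / sqrt (4 * gam * \<tau>))^2 / (1 - y))))"
    unfolding A B C by (simp only: mult_ac)
  finally show ?thesis
    unfolding D by simp
qed

lemma nn_integral_heat_history:
  fixes gam x t0 t :: real and m :: nat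
  assumes gam: "gam > 0" and t: "t > t0"
  shows "(\<integral>\<^sup>+s. ennreal ((s - t0) powr ((real m - 1) / 2) / sqrt (t - s) * exp (-(x^2) / (4 * gam * (t - s))))
                * indicator {t0<..<t} s \<partial>lborel)
       = ennreal ((t - t0) powr (real m / 2)) * beta_gauss_F ((real m + 1) / 2) (x / sqrt (4 * gam * (t - t0)))"
proof -
  define \<tau> where "\<tau> = t - t0"
  have tau: "\<tau> > 0"
    using t by (simp add: \<tau>_def)
  define g where "g s = (s - t0) powr ((real m - 1) / 2) / sqrt (t - s) * exp (-(x^2) / (4 * gam * (t - s)))" for s
  have rescaled: "ennreal (g (t0 + \<tau> * y)) * indicator {t0<..<t} (t0 + \<tau> * y)
      = ennreal (\<tau> powr (real m / 2 - 1))
        * (ennreal (y powr ((real m + 1) / 2 - 1) * (1 - y) powr (-1/2)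
             * exp (-((x / sqrt (4 * gam * \<tau>))^2) / (1 - y))) * indicator {0<..<1} y)" for y
  proof (cases "y \<in> {0<..<1}")
    case True
    then have "0 < \<tau> * y" "\<tau> * y < \<tau>"
      using tau by (simp_all add: mult_less_cancel_left1)
    moreover have "g (t0 + \<tau> * y) = (\<tau> * y) powr ((real m - 1) / 2) / sqrt (\<tau> - \<tau> * y)
        * exp (-(x^2) / (4 * gam * (\<tau> - \<tau> * y)))"
      by (simp add: g_def \<tau>_def algebra_simps)
    ultimately show ?thesis
      using True heat_history_rescaled[OF gam tau True, of m x]
      by (simp add: \<tau>_def ennreal_mult'[symmetric])
  next
    case False
    then have "\<tau> * y \<le> 0 \<or> \<tau> * y \<ge> \<tau>"
      using tau by (auto simp: mult_le_cancel_left1 mult_nonneg_nonpos)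
    then have "t0 + \<tau> * y \<notin> {t0<..<t}"
      by (auto simp: \<tau>_def)
    then show ?thesis
      using False by simp
  qed
  have "(\<integral>\<^sup>+s. ennreal (g s) * indicator {t0<..<t} s \<partial>lborel)
      = ennreal \<tau> * (\<integral>\<^sup>+y. ennreal (g (t0 + \<tau> * y)) * indicator {t0<..<t} (t0 + \<tau> * y) \<partial>lborel)"
    using tau by (subst nn_integral_real_affine[where c = \<tau> and t = t0]) (auto simp: g_def)
  also have "\<dots> = ennreal \<tau> * (ennreal (\<tau> powr (real m / 2 - 1)) * beta_gauss_F ((real m + 1) / 2) (x / sqrt (4 * gam * \<tau>)))"
    unfolding rescaled beta_gauss_F_def by (subst nn_integral_cmult) auto
  also have "\<dots> = ennreal (\<tau> powr (real m / 2)) * beta_gauss_F ((real m + 1) / 2) (x / sqrt (4 * gam * \<tau>))"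
    using tau by (simp add: mult.assoc[symmetric] ennreal_mult'[symmetric] powr_mult_base)
  finally show ?thesis
    by (simp add: g_def \<tau>_def)
qed

lemma set_integral_heat_history:
  fixes gam x t0 t :: real and m :: nat
  assumes gam: "gam > 0" and x: "x \<ge> 0" and t: "t > t0"
  shows "(LINT s:{t0<..<t}|lborel. (s - t0) powr ((real m - 1) / 2) / sqrt (t - s) * exp (-(x^2) / (4 * gam * (t - s))))
       = (t - t0) powr (real m / 2) * kummer_R ((real m + 1) / 2) (x / sqrt (4 * gam * (t - t0)))"
proof -
  define \<zeta> where "\<zeta> = x / sqrt (4 * gam * (t - t0))"
  have F_eq: "beta_gauss_F ((real m + 1) / 2) \<zeta> = ennreal (kummer_R ((real m + 1) / 2) \<zeta>)"
    and R_nonneg: "kummer_R ((real m + 1) / 2) \<zeta> \<ge> 0"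
    using beta_gauss_F_eq_kummer_R[of "Suc m" \<zeta>] x gam t by (simp_all add: \<zeta>_def add.commute)
  define g where "g s = (s - t0) powr ((real m - 1) / 2) / sqrt (t - s) * exp (-(x^2) / (4 * gam * (t - s)))" for s
  have nonneg: "0 \<le> indicator {t0<..<t} s * g s" for s
    by (cases "s \<in> {t0<..<t}") (auto simp: g_def)
  have ennreal_ind: "ennreal (indicator {t0<..<t} s * g s) = ennreal (g s) * indicator {t0<..<t} s" for s
    by (cases "s \<in> {t0<..<t}") auto
  have "(LINT s:{t0<..<t}|lborel. g s) = enn2real (\<integral>\<^sup>+s. ennreal (indicator {t0<..<t} s * g s) \<partial>lborel)"
    unfolding set_lebesgue_integral_def scaleR_conv_of_real of_real_def[symmetric] of_real_eq_id id_def
    by (rule integral_eq_nn_integral) (use nonneg in \<open>auto simp: g_def\<close>)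
  also have "\<dots> = enn2real (\<integral>\<^sup>+s. ennreal ((s - t0) powr ((real m - 1) / 2) / sqrt (t - s) * exp (-(x^2) / (4 * gam * (t - s))))
                * indicator {t0<..<t} s \<partial>lborel)"
    unfolding ennreal_ind by (simp only: g_def)
  also have "\<dots> = (t - t0) powr (real m / 2) * kummer_R ((real m + 1) / 2) \<zeta>"
    unfolding nn_integral_heat_history[OF gam t] \<zeta>_def[symmetric] F_eq
    using R_nonneg by (simp add: ennreal_mult'[symmetric] enn2real_mult)
  finally show ?thesis
    by (simp add: \<zeta>_def g_def)
qed

definition origin_factor :: "nat \<Rightarrow> real" where
  "origin_factor m = 2 ^ (m div 2) * pi ^ ((m + 1) div 2) / real (dfact (int m - 1))"

definition origin_coeff :: "real \<Rightarrow> real \<Rightarrow> nat \<Rightarrow> real" where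
  "origin_coeff gam bet m = (- bet) ^ m / (4 * (pi * gam) powr ((real m + 3) / 2)) * origin_factor m"

lemma origin_factor_Suc: "origin_factor m * Beta ((real m + 1) / 2) (1/2) = origin_factor (Suc m)"
proof (cases "even m")
  case True
  then obtain j where m: "m = 2 * j"
    by blast
  have "(real m + 1) / 2 = real j + 1/2"
    by (simp add: m)
  then have Beta_eq: "Beta ((real m + 1) / 2) (1/2) = pi * real (dfact (2 * int j - 1)) / real (dfact (2 * int j))"
    by (simp only: Beta_half_odd)
  have idx: "int m - 1 = 2 * int j - 1" "int (Suc m) - 1 = 2 * int j"
    "m div 2 = j" "(m + 1) div 2 = j" "Suc m div 2 = j" "(Suc m + 1) div 2 = Suc j"
    by (simp_all add: m)
  show ?thesis
    unfolding origin_factor_def Beta_eq idx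
    using dfact_pos[of "2 * int j - 1"] dfact_pos[of "2 * int j"] by (simp add: field_simps)
next
  case False
  then obtain j where m: "m = 2 * j + 1"
    using oddE by blast
  have "(real m + 1) / 2 = real j + 1"
    by (simp add: m)
  then have Beta_eq: "Beta ((real m + 1) / 2) (1/2) = 2 * real (dfact (2 * int j)) / real (dfact (2 * int j + 1))"
    by (simp only: Beta_half_even)
  have idx: "int m - 1 = 2 * int j" "int (Suc m) - 1 = 2 * int j + 1"
    "m div 2 = j" "(m + 1) div 2 = Suc j" "Suc m div 2 = Suc j" "(Suc m + 1) div 2 = Suc j"
    by (simp_all add: m)
  show ?thesis
    unfolding origin_factor_def Beta_eq idx
    using dfact_pos[of "2 * int j"] dfact_pos[of "2 * int j + 1"] by (simp add: field_simps)
qed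

lemma sqrt_mult_powr: "P > 0 \<Longrightarrow> sqrt P * P powr a = P powr (a + 1/2)"
  by (simp add: powr_half_sqrt[symmetric] powr_add)

lemma w_Suc_eq:
  fixes gam bet t0 x t C :: real and m :: nat
  assumes gam: "gam > 0" and x: "x \<ge> 0" and t: "t > t0"
    and w_origin: "\<And>s. s > t0 \<Longrightarrow> w gam bet t0 m 0 s = C * (s - t0) powr ((real m - 1) / 2)"
  shows "w gam bet t0 (Suc m) x t = - bet / sqrt (pi * gam) * C
           * ((t - t0) powr (real m / 2) * kummer_R ((real m + 1) / 2) (x / sqrt (4 * gam * (t - t0))))"
proof -
  have "w gam bet t0 (Suc m) x t = - bet / sqrt (pi * gam)
      * (LINT s:{t0<..<t}|lborel. w gam bet t0 m 0 s / sqrt (t - s) * exp (-(x^2) / (4 * gam * (t - s))))"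
    using t by simp
  also have "(LINT s:{t0<..<t}|lborel. w gam bet t0 m 0 s / sqrt (t - s) * exp (-(x^2) / (4 * gam * (t - s))))
      = (LINT s:{t0<..<t}|lborel. C * ((s - t0) powr ((real m - 1) / 2) / sqrt (t - s) * exp (-(x^2) / (4 * gam * (t - s)))))"
    by (rule set_lebesgue_integral_cong) (auto simp: w_origin)
  also have "\<dots> = C * (LINT s:{t0<..<t}|lborel. (s - t0) powr ((real m - 1) / 2) / sqrt (t - s) * exp (-(x^2) / (4 * gam * (t - s))))"
    by (rule set_integral_mult_right)
  finally show ?thesis
    unfolding set_integral_heat_history[OF gam x t] by (simp only: mult.assoc)
qed

lemma w_origin_eq:
  fixes gam bet t0 t :: real and m :: nat
  assumes gam: "gam > 0" and t: "t > t0"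
  shows "w gam bet t0 m 0 t = origin_coeff gam bet m * (t - t0) powr ((real m - 1) / 2)"
  using t
proof (induction m arbitrary: t)
  case 0
  then have "sqrt (t - t0) = (t - t0) powr (1/2)"
    by (simp add: powr_half_sqrt)
  then show ?case
    using 0 by (simp add: origin_coeff_def origin_factor_def dfact_nonpos powr_minus_divide)
next
  case (Suc m)
  have P: "pi * gam > 0"
    using gam by simp
  have "w gam bet t0 (Suc m) 0 t = - bet / sqrt (pi * gam) * origin_coeff gam bet m
          * ((t - t0) powr (real m / 2) * kummer_R ((real m + 1) / 2) 0)"
    using w_Suc_eq[OF gam _ Suc.prems, of 0] Suc.IH by simp
  also have "\<dots> = (- bet) ^ Suc m / (4 * (sqrt (pi * gam) * (pi * gam) powr ((real m + 3) / 2)))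
          * (origin_factor m * Beta ((real m + 1) / 2) (1/2)) * (t - t0) powr (real m / 2)"
    using P by (simp add: origin_coeff_def kummer_R_zero field_simps)
  also have "\<dots> = origin_coeff gam bet (Suc m) * (t - t0) powr ((real (Suc m) - 1) / 2)"
    unfolding origin_factor_Suc sqrt_mult_powr[OF P] by (simp add: origin_coeff_def add_divide_distrib)
  finally show ?case .
qed

lemma w_Suc_closed_form:
  fixes gam bet t0 x t :: real and m :: nat
  assumes gam: "gam > 0" and x: "x \<ge> 0" and t: "t > t0"
  shows "w gam bet t0 (Suc m) x t
       = (- bet) ^ Suc m * (t - t0) powr (real m / 2) / (4 * (pi * gam) powr ((real (Suc m) + 3) / 2))
         * origin_factor m * kummer_R ((real m + 1) / 2) (x / sqrt (4 * gam * (t - t0)))"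
proof -
  have P: "pi * gam > 0"
    using gam by simp
  have "w gam bet t0 (Suc m) x t = (- bet) ^ Suc m / (4 * (sqrt (pi * gam) * (pi * gam) powr ((real m + 3) / 2)))
          * origin_factor m * (t - t0) powr (real m / 2) * kummer_R ((real m + 1) / 2) (x / sqrt (4 * gam * (t - t0)))"
    using w_Suc_eq[OF gam x t w_origin_eq[OF gam]] P by (simp add: origin_coeff_def field_simps)
  then show ?thesis
    unfolding sqrt_mult_powr[OF P] by (simp add: add_divide_distrib)
qed

lemma nat_floor_half: "nat \<lfloor>real n / 2\<rfloor> = n div 2"
proof -
  have "\<lfloor>real n / 2\<rfloor> = int (n div 2)"
    using floor_divide_of_nat_eq[of n 2] by simp
  then show ?thesis
    by simp
qed

lemma w_closed_form:
  fixes gam bet t0 x3 t :: real and n :: nat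
  assumes "gam > 0" and "n \<ge> 1" and "x3 \<ge> 0" and "t > t0"
  defines "\<zeta> \<equiv> x3 / sqrt (4 * gam * (t - t0))"
  shows "w gam bet t0 n x3 t =
           (- bet) ^ n * (t - t0) powr ((real n - 1) / 2) / (4 * (pi * gam) powr ((real n + 3) / 2))
           * (2 ^ nat \<lfloor>(real n - 1) / 2\<rfloor> * pi ^ nat \<lfloor>real n / 2\<rfloor> / real (dfact (int n - 2)))
           * (Beta (real n / 2) (1/2) * hyp1F1 ((1 - real n) / 2) (1/2) (- (\<zeta>^2))
              - 2 * sqrt pi * \<zeta> * hyp1F1 (1 - real n / 2) (3/2) (- (\<zeta>^2)))"
proof -
  obtain m where n: "n = Suc m"
    using \<open>n \<ge> 1\<close> by (cases n) auto
  have exponent: "(real (Suc m) - 1) / 2 = real m / 2"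
    by simp
  have factor: "2 ^ nat \<lfloor>(real n - 1) / 2\<rfloor> * pi ^ nat \<lfloor>real n / 2\<rfloor> / real (dfact (int n - 2)) = origin_factor m"
    using nat_floor_half[of m] nat_floor_half[of n] by (simp add: n origin_factor_def)
  have bracket: "kummer_R ((real m + 1) / 2) \<zeta> = Beta (real n / 2) (1/2) * hyp1F1 ((1 - real n) / 2) (1/2) (- (\<zeta>^2))
              - 2 * sqrt pi * \<zeta> * hyp1F1 (1 - real n / 2) (3/2) (- (\<zeta>^2))"
    by (simp add: kummer_R_def n diff_divide_distrib add_divide_distrib add.commute)
  have "w gam bet t0 n x3 t = (- bet) ^ n * (t - t0) powr ((real n - 1) / 2) / (4 * (pi * gam) powr ((real n + 3) / 2))
      * origin_factor m * kummer_R ((real m + 1) / 2) \<zeta>"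
    unfolding \<zeta>_def exponent n by (rule w_Suc_closed_form) (use assms in auto)
  then show ?thesis
    unfolding factor bracket .
qed

lemma w_origin_closed_form:
  fixes gam bet t0 t :: real and n :: nat
  assumes "gam > 0" and "t > t0"
  shows "w gam bet t0 n 0 t =
           (- bet) ^ n * (t - t0) powr ((real n - 1) / 2) / (4 * (pi * gam) powr ((real n + 3) / 2))
           * (2 ^ nat \<lfloor>real n / 2\<rfloor> * pi ^ nat \<lfloor>(real n + 1) / 2\<rfloor> / real (dfact (int n - 1)))"
proof -
  have factor: "2 ^ nat \<lfloor>real n / 2\<rfloor> * pi ^ nat \<lfloor>(real n + 1) / 2\<rfloor> / real (dfact (int n - 1)) = origin_factor n"
    using nat_floor_half[of n] nat_floor_half[of "n + 1"] by (simp add: origin_factor_def add.commute)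
  have reorder: "a / b * c * d = a * d / b * c" for a b c d :: real
    by simp
  show ?thesis
    unfolding factor w_origin_eq[OF assms] origin_coeff_def by (rule reorder)
qed

theorem mainTheorem8:
  fixes gam bet t0 x3 t :: real and n :: nat
  assumes "gam > 0" and "bet \<ge> 0" and "n \<ge> 1" and "x3 \<ge> 0" and "t > t0"
  defines "\<zeta> \<equiv> x3 / sqrt (4 * gam * (t - t0))"
  shows "(w gam bet t0 n x3 t =
           (- bet) ^ n * (t - t0) powr ((real n - 1) / 2) / (4 * (pi * gam) powr ((real n + 3) / 2))
           * (2 ^ nat \<lfloor>(real n - 1) / 2\<rfloor> * pi ^ nat \<lfloor>real n / 2\<rfloor> / real (dfact (int n - 2)))
           * (Beta (real n / 2) (1/2) * hyp1F1 ((1 - real n) / 2) (1/2) (- (\<zeta>^2))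
              - 2 * sqrt pi * \<zeta> * hyp1F1 (1 - real n / 2) (3/2) (- (\<zeta>^2))))
         \<and> (w gam bet t0 n 0 t =
           (- bet) ^ n * (t - t0) powr ((real n - 1) / 2) / (4 * (pi * gam) powr ((real n + 3) / 2))
           * (2 ^ nat \<lfloor>real n / 2\<rfloor> * pi ^ nat \<lfloor>(real n + 1) / 2\<rfloor> / real (dfact (int n - 1))))"
  unfolding \<zeta>_def using assms by (intro conjI w_closed_form w_origin_closed_form)

end
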